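(* Let $\mathfrak h=\mathfrak{su}(p',q')$ with $0<p'<q'$, with restricted root data as in the context, and let $\mathfrak h^0\subset\mathfrak h$ be a subalgebra invariant under $\mathrm{ad}\,\mathfrak b_H$. Then: (1) if $\mathfrak a_H\subset\mathfrak h^0$, then $\mathfrak b_H\subset\mathfrak h^0$; (2) for $i',j'$ (possibly equal), if $\mathfrak h_{-\alpha_{i'}-\alpha_{j'}}\cap\mathfrak h^0\ne0$, then $\mathfrak h_{-\alpha_{i'}}\subset\mathfrak h^0$; (3) if $p'\ge2$, $i'\ne j'$, $\mathfrak h_{-\alpha_{i'}}\subset\mathfrak h^0$ and $\mathfrak h_{-\alpha_{j'}}\cap\mathfrak h^0\ne0$, then $\mathfrak h_{-\alpha_{j'}}\subset\mathfrak h^0$.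
   Context: $\mathfrak a_H$ is a maximal $\mathbf R$-split abelian subalgebra of $\mathfrak h$; the restricted root system is $BC_{p'}$, with short roots $\alpha_1,\dots,\alpha_{p'}\in\mathfrak a_H^*$ chosen so that the positive roots are $\{\alpha_{k'}\}\cup\{\alpha_{i'}-\alpha_{j'}:i'<j'\}\cup\{\alpha_{i'}+\alpha_{j'}\}$ (the last including $2\alpha_{i'}$). Root spaces: $\dim\mathfrak h_{\pm\alpha_{k'}}=2(q'-p')$, $\dim\mathfrak h_{\pm\alpha_{i'}\pm\alpha_{j'}}=2$ for $i'\ne j'$, $\dim\mathfrak h_{\pm2\alpha_{i'}}=1$. $\mathfrak b_H=\mathfrak a_H\oplus\bigoplus_{\alpha>0}\mathfrak h_\alpha$ (Borel subalgebra; the compact part of the centralizer of $\mathfrak a_H$ is omitted from $\mathfrak b_H$ here). *)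

theory Defs
  imports Complex_Main "HOL-Library.Function_Algebras"
begin

text \<open>Matrices of size n x n over the complex numbers are represented as functions
  nat => nat => complex, supported on indices below n.
  Basis ordering: indices 0..p-1 are e_1..e_p, indices p..q-1 are f_1..f_(q-p),
  indices q..q+p-1 are e'_1..e'_p. The hermitian form S pairs e_i with e'_i
  (hyperbolic planes) and is -1 on the f_k, so it has signature (p,q).\<close>

type_synonym cmat = "nat \<Rightarrow> nat \<Rightarrow> complex"

definition inmat :: "nat \<Rightarrow> cmat \<Rightarrow> bool" where
  "inmat n X \<longleftrightarrow> (\<forall>i j. (n \<le> i \<or> n \<le> j) \<longrightarrow> X i j = 0)"

definition ctrans :: "cmat \<Rightarrow> cmat" where
  "ctrans X = (\<lambda>i j. cnj (X j i))"

definition mmul :: "nat \<Rightarrow> cmat \<Rightarrow> cmat \<Rightarrow> cmat" where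
  "mmul n A B = (\<lambda>i j. \<Sum>k<n. A i k * B k j)"

definition bracket :: "nat \<Rightarrow> cmat \<Rightarrow> cmat \<Rightarrow> cmat" where
  "bracket n X Y = mmul n X Y - mmul n Y X"

definition rsmult :: "real \<Rightarrow> cmat \<Rightarrow> cmat" where
  "rsmult r X = (\<lambda>i j. complex_of_real r * X i j)"

definition formS :: "nat \<Rightarrow> nat \<Rightarrow> cmat" where
  "formS p q = (\<lambda>i j.
     if i < p \<and> j = q + i then 1
     else if j < p \<and> i = q + j then 1
     else if p \<le> i \<and> i < q \<and> i = j then -1
     else 0)"

definition su :: "nat \<Rightarrow> nat \<Rightarrow> cmat set" where
  "su p q = {X. inmat (p+q) X
               \<and> mmul (p+q) (ctrans X) (formS p q) + mmul (p+q) (formS p q) X = 0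
               \<and> (\<Sum>i<p+q. X i i) = 0}"

definition diagA :: "nat \<Rightarrow> nat \<Rightarrow> (nat \<Rightarrow> real) \<Rightarrow> cmat" where
  "diagA p q t = (\<lambda>i j. if i = j \<and> i < p then complex_of_real (t i)
                        else if i = j \<and> q \<le> i \<and> i < q + p then - complex_of_real (t (i - q))
                        else 0)"

definition aH :: "nat \<Rightarrow> nat \<Rightarrow> cmat set" where
  "aH p q = range (diagA p q)"

text \<open>Elements of a_H^* given by integer coefficient vectors c w.r.t. alpha_1..alpha_p:
  the functional sends diagA t to sum_i c_i t_i.\<close>
definition rootval :: "nat \<Rightarrow> (nat \<Rightarrow> int) \<Rightarrow> (nat \<Rightarrow> real) \<Rightarrow> real" where
  "rootval p c t = (\<Sum>i<p. real_of_int (c i) * t i)"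

definition rootsp :: "nat \<Rightarrow> nat \<Rightarrow> (nat \<Rightarrow> int) \<Rightarrow> cmat set" where
  "rootsp p q c = {X \<in> su p q. \<forall>t. bracket (p+q) (diagA p q t) X = rsmult (rootval p c t) X}"

text \<open>alpha_i (0-based index i < p).\<close>
definition alpha :: "nat \<Rightarrow> nat \<Rightarrow> int" where
  "alpha i = (\<lambda>k. if k = i then 1 else 0)"

definition posroots :: "nat \<Rightarrow> (nat \<Rightarrow> int) set" where
  "posroots p = {alpha k | k. k < p}
              \<union> {alpha i - alpha j | i j. i < j \<and> j < p}
              \<union> {alpha i + alpha j | i j. i \<le> j \<and> j < p}"

definition bH :: "nat \<Rightarrow> nat \<Rightarrow> cmat set" where
  "bH p q = {H + (\<Sum>c\<in>posroots p. X c) | H X.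
               H \<in> aH p q \<and> (\<forall>c\<in>posroots p. X c \<in> rootsp p q c)}"

definition subalgebra :: "nat \<Rightarrow> nat \<Rightarrow> cmat set \<Rightarrow> bool" where
  "subalgebra p q A \<longleftrightarrow> A \<subseteq> su p q \<and> 0 \<in> A
     \<and> (\<forall>X\<in>A. \<forall>Y\<in>A. X + Y \<in> A)
     \<and> (\<forall>r. \<forall>X\<in>A. rsmult r X \<in> A)
     \<and> (\<forall>X\<in>A. \<forall>Y\<in>A. bracket (p+q) X Y \<in> A)"

end

theory Submission
  imports Defs
begin

text \<open>In the basis \<open>e, f, e'\<close> every root space needed here is spanned by explicit matrices:
  \<open>h_{-alpha_i}\<close> consists of the \<open>neg_alpha_vec i u\<close> with \<open>u\<close> a vector in the \<open>f\<close>-block,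
  \<open>h_{alpha_j}\<close> of the analogous \<open>alpha_vec j u\<close>, and \<open>h_{-alpha_i-alpha_j}\<close> is the line of the
  \<open>neg_alpha_sum_vec i j x\<close> (\<open>x\<close> imaginary when \<open>i = j\<close>).
  (1) The element of \<open>a_H\<close> dual to a coordinate on which a positive root \<open>c\<close> is nonzero acts on
  \<open>h_c\<close> by that nonzero scalar.
  (2) For \<open>x \<noteq> 0\<close>, \<open>[alpha_vec j (-conj u / x), neg_alpha_sum_vec i j x] = neg_alpha_vec i u\<close>, so
  one nonzero element of \<open>h_{-alpha_i-alpha_j}\<close> generates all of \<open>h_{-alpha_i}\<close> under \<open>ad b_H\<close>.
  (3) For \<open>u \<noteq> 0\<close>, \<open>[neg_alpha_vec i u, neg_alpha_vec j u] = neg_alpha_sum_vec i j |u|^2\<close> is a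
  nonzero element of \<open>h_{-alpha_i-alpha_j} \<inter> h0\<close>, so (2) applies with \<open>i\<close> and \<open>j\<close> swapped.\<close>

lemma mmul_single_index:
  assumes "m < n" "\<And>k. k < n \<Longrightarrow> k \<noteq> m \<Longrightarrow> A a k * B k b = 0"
  shows "mmul n A B a b = A a m * B m b"
proof -
  have "mmul n A B a b = (\<Sum>k<n. if k = m then A a m * B m b else 0)"
    unfolding mmul_def using assms(2) by (intro sum.cong) auto
  then show ?thesis using assms(1) by simp
qed

lemma bracket_swap: "bracket n X Y = - bracket n Y X"
  by (simp add: bracket_def)

lemma subalgebra_sum:
  assumes "subalgebra p q A" "\<And>c. c \<in> S \<Longrightarrow> f c \<in> A"
  shows "sum f S \<in> A"
proof (cases "finite S")
  case True
  then show ?thesis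
    using assms(2) by (induction S rule: finite_induct)
      (use assms(1) in \<open>auto simp: subalgebra_def\<close>)
next
  case False
  then show ?thesis
    using assms(1) by (simp add: subalgebra_def)
qed

lemma subalgebra_rsmult_cancel:
  assumes "subalgebra p q A" "rsmult r X \<in> A" "r \<noteq> 0"
  shows "X \<in> A"
proof -
  have "rsmult (1 / r) (rsmult r X) \<in> A"
    using assms(1,2) by (simp add: subalgebra_def)
  moreover have "rsmult (1 / r) (rsmult r X) = X"
    using assms(3) by (simp add: rsmult_def fun_eq_iff)
  ultimately show ?thesis by simp
qed

section \<open>The form \<open>S\<close> and membership in \<open>su(p,q)\<close>\<close>

definition partner :: "nat \<Rightarrow> nat \<Rightarrow> nat \<Rightarrow> nat" where
  "partner p q a = (if a < p then q + a else if a < q then a else a - q)"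

definition partner_sign :: "nat \<Rightarrow> nat \<Rightarrow> nat \<Rightarrow> complex" where
  "partner_sign p q a = (if a < p then 1 else if a < q then -1 else if a < q + p then 1 else 0)"

lemma formS_eq:
  "p < q \<Longrightarrow> formS p q a k = (if k = partner p q a then partner_sign p q a else 0)"
  unfolding formS_def partner_def partner_sign_def by auto

lemma formS_commute: "formS p q a k = formS p q k a"
  unfolding formS_def by auto

lemma partner_sign_eq_0: "p < q \<Longrightarrow> \<not> partner p q a < p + q \<Longrightarrow> partner_sign p q a = 0"
  unfolding partner_def partner_sign_def by (auto split: if_splits)

lemma mmul_formS_left:
  assumes "p < q"
  shows "mmul (p+q) (formS p q) X a b = partner_sign p q a * X (partner p q a) b"
proof -
  have "mmul (p+q) (formS p q) X a b
      = (\<Sum>k<p+q. if k = partner p q a then partner_sign p q a * X k b else 0)"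
    unfolding mmul_def formS_eq[OF assms] by (intro sum.cong) auto
  then show ?thesis
    using partner_sign_eq_0[OF assms, of a] by (simp add: sum.delta)
qed

lemma mmul_ctrans_formS:
  assumes "p < q"
  shows "mmul (p+q) (ctrans X) (formS p q) a b = cnj (X (partner p q b) a) * partner_sign p q b"
proof -
  have "formS p q k b = (if k = partner p q b then partner_sign p q b else 0)" for k
    using formS_commute formS_eq[OF assms] by metis
  then have "mmul (p+q) (ctrans X) (formS p q) a b
      = (\<Sum>k<p+q. if k = partner p q b then cnj (X k a) * partner_sign p q b else 0)"
    unfolding mmul_def ctrans_def by (intro sum.cong) auto
  then show ?thesis
    using partner_sign_eq_0[OF assms, of b] by (simp add: sum.delta)
qed

lemma su_iff:
  assumes "p < q"
  shows "M \<in> su p q \<longleftrightarrow> inmat (p+q) M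
    \<and> (\<forall>a b. cnj (M (partner p q b) a) * partner_sign p q b
              + partner_sign p q a * M (partner p q a) b = 0)
    \<and> (\<Sum>i<p+q. M i i) = 0"
  by (auto simp: su_def fun_eq_iff mmul_formS_left[OF assms] mmul_ctrans_formS[OF assms])

section \<open>Weights of \<open>a_H\<close> and root spaces\<close>

definition weight :: "nat \<Rightarrow> nat \<Rightarrow> nat \<Rightarrow> nat \<Rightarrow> int" where
  "weight p q a = (if a < p then alpha a else if q \<le> a \<and> a < q + p then - alpha (a - q) else 0)"

lemma rootval_alpha:
  assumes "i < p"
  shows "rootval p (alpha i) t = t i"
proof -
  have "rootval p (alpha i) t = (\<Sum>k<p. if k = i then t i else 0)"
    unfolding rootval_def alpha_def by (intro sum.cong) auto
  then show ?thesis using assms by simp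
qed

lemma rootval_uminus: "rootval p (- c) t = - rootval p c t"
  by (simp add: rootval_def sum_negf)

lemma rootval_diff: "rootval p (c - d) t = rootval p c t - rootval p d t"
  by (simp add: rootval_def sum_subtractf left_diff_distrib)

lemma rootval_indicator: "k < p \<Longrightarrow> rootval p c (\<lambda>i. if i = k then 1 else 0) = of_int (c k)"
  by (simp add: rootval_def if_distrib sum.delta cong: if_cong)

lemma rootval_eq_iff: "(\<forall>t. rootval p c t = rootval p d t) \<longleftrightarrow> (\<forall>k<p. c k = d k)"
proof
  assume eq: "\<forall>t. rootval p c t = rootval p d t"
  show "\<forall>k<p. c k = d k"
  proof (intro allI impI)
    fix k assume "k < p"
    then show "c k = d k"
      using eq rootval_indicator[of k p] by (metis of_int_eq_iff)
  qed
qed (simp add: rootval_def)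

lemma diagA_diag: "p < q \<Longrightarrow> diagA p q t a a = of_real (rootval p (weight p q a) t)"
  using rootval_def[of p 0 t]
  by (auto simp: diagA_def weight_def rootval_alpha rootval_uminus)

lemma bracket_diagA:
  "bracket (p+q) (diagA p q t) X a b = (diagA p q t a a - diagA p q t b b) * X a b"
proof -
  have "mmul (p+q) (diagA p q t) X a b = (\<Sum>k<p+q. if k = a then diagA p q t a a * X k b else 0)"
    unfolding mmul_def by (intro sum.cong) (auto simp: diagA_def)
  also have "\<dots> = diagA p q t a a * X a b"
    by (auto simp: diagA_def)
  moreover have "mmul (p+q) X (diagA p q t) a b = (\<Sum>k<p+q. if k = b then X a k * diagA p q t b b else 0)"
    unfolding mmul_def by (intro sum.cong) (auto simp: diagA_def)
  moreover have "\<dots> = X a b * diagA p q t b b"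
    by (auto simp: diagA_def)
  ultimately show ?thesis
    by (simp add: bracket_def algebra_simps)
qed

lemma rootsp_iff:
  assumes "p < q"
  shows "M \<in> rootsp p q c \<longleftrightarrow> M \<in> su p q
    \<and> (\<forall>a b. M a b \<noteq> 0 \<longrightarrow> (\<forall>k<p. weight p q a k - weight p q b k = c k))"
proof -
  have entry: "bracket (p+q) (diagA p q t) M a b = rsmult (rootval p c t) M a b
      \<longleftrightarrow> M a b = 0 \<or> rootval p (weight p q a - weight p q b) t = rootval p c t" for a b t
    by (auto simp: bracket_diagA rsmult_def diagA_diag[OF assms] rootval_diff
        simp flip: of_real_diff)
  have "(\<forall>t. bracket (p+q) (diagA p q t) M = rsmult (rootval p c t) M)
      \<longleftrightarrow> (\<forall>a b. M a b \<noteq> 0 \<longrightarrow> (\<forall>t. rootval p (weight p q a - weight p q b) t = rootval p c t))"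
    unfolding fun_eq_iff entry by blast
  then show ?thesis
    unfolding rootsp_def rootval_eq_iff by simp
qed

lemma rootsp_entry_index_bound:
  assumes "p < q" "M \<in> rootsp p q c" "M a b \<noteq> 0"
  shows "a < p + q" "b < p + q"
  using assms unfolding rootsp_iff[OF assms(1)] su_iff[OF assms(1)] inmat_def
  by (meson not_le)+

lemma rootsp_adjoint:
  assumes "p < q" "M \<in> rootsp p q c"
  shows "cnj (M (partner p q b) a) * partner_sign p q b + partner_sign p q a * M (partner p q a) b = 0"
  using assms(2) unfolding rootsp_iff[OF assms(1)] su_iff[OF assms(1)] by blast

lemma weight_cases: "weight p q a k = -1 \<or> weight p q a k = 0 \<or> weight p q a k = 1"
  by (simp add: weight_def alpha_def)

lemma weight_eq_1_iff: "weight p q a k = 1 \<longleftrightarrow> a < p \<and> a = k"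
  by (simp add: weight_def alpha_def)

lemma weight_eq_minus_1_iff: "p < q \<Longrightarrow> weight p q a k = -1 \<longleftrightarrow> a = q + k \<and> k < p"
  by (auto simp: weight_def alpha_def)

lemma weight_diff_eq_minus_1:
  assumes "p < q" "weight p q a k - weight p q b k = -1"
  shows "a = q + k \<or> b = k"
proof -
  have "weight p q a k = -1 \<or> weight p q b k = 1"
    using assms(2) weight_cases[of p q a k] weight_cases[of p q b k] by auto
  then show ?thesis
    unfolding weight_eq_1_iff weight_eq_minus_1_iff[OF assms(1)] by blast
qed

lemma weight_diff_eq_minus_2:
  assumes "p < q" "weight p q a k - weight p q b k = -2"
  shows "a = q + k \<and> b = k"
proof -
  have "weight p q a k = -1 \<and> weight p q b k = 1"
    using assms(2) weight_cases[of p q a k] weight_cases[of p q b k] by auto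
  then show ?thesis
    unfolding weight_eq_1_iff weight_eq_minus_1_iff[OF assms(1)] by blast
qed

lemma weight_eq_0_iff:
  assumes "p < q" "a < p + q"
  shows "(\<forall>k<p. weight p q a k = 0) \<longleftrightarrow> p \<le> a \<and> a < q"
proof
  assume zero: "\<forall>k<p. weight p q a k = 0"
  show "p \<le> a \<and> a < q"
  proof (rule ccontr)
    assume "\<not> (p \<le> a \<and> a < q)"
    then have "weight p q a a = 1 \<and> a < p \<or> weight p q a (a - q) = -1 \<and> a - q < p"
      using assms by (auto simp: weight_eq_1_iff weight_eq_minus_1_iff[OF assms(1)])
    then show False using zero by force
  qed
qed (simp add: weight_def)

lemma weight_self: "i < p \<Longrightarrow> weight p q i = alpha i"
  by (simp add: weight_def)

lemma weight_partner: "p < q \<Longrightarrow> i < p \<Longrightarrow> weight p q (q + i) = - alpha i"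
  by (simp add: weight_def)

lemma weight_middle: "p \<le> a \<Longrightarrow> a < q \<Longrightarrow> weight p q a = 0"
  by (simp add: weight_def fun_eq_iff)

lemma rootsp_neg_alpha_support:
  assumes "p < q" "i < p" "M \<in> rootsp p q (- alpha i)" "M a b \<noteq> 0"
  shows "(p \<le> a \<and> a < q \<and> b = i) \<or> (a = q + i \<and> p \<le> b \<and> b < q)"
proof -
  have w: "\<And>k. k < p \<Longrightarrow> weight p q a k = weight p q b k - alpha i k"
    using assms(3,4) unfolding rootsp_iff[OF assms(1)] by (simp add: algebra_simps)
  note bounds = rootsp_entry_index_bound[OF assms(1,3,4)]
  have "weight p q a i - weight p q b i = -1"
    using w[OF assms(2)] by (simp add: alpha_def)
  then consider "a = q + i" | "b = i"
    using weight_diff_eq_minus_1[OF assms(1)] by blast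
  then show ?thesis
  proof cases
    case 1
    then have "\<forall>k<p. weight p q b k = 0"
      using w assms(1,2) by (simp add: weight_partner)
    then show ?thesis using 1 weight_eq_0_iff[OF assms(1) bounds(2)] by blast
  next
    case 2
    then have "\<forall>k<p. weight p q a k = 0" using w assms(2) by (simp add: weight_self)
    then show ?thesis using 2 weight_eq_0_iff[OF assms(1) bounds(1)] by blast
  qed
qed

lemma rootsp_neg_alpha_sum_support:
  assumes "p < q" "i < p" "j < p" "M \<in> rootsp p q (- (alpha i + alpha j))" "M a b \<noteq> 0"
  shows "(a = q + i \<and> b = j) \<or> (a = q + j \<and> b = i)"
proof -
  have w: "\<And>k. k < p \<Longrightarrow> weight p q a k - weight p q b k = - (alpha i k + alpha j k)"
    using assms(4,5) unfolding rootsp_iff[OF assms(1)] by simp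
  show ?thesis
  proof (cases "i = j")
    case True
    then have "weight p q a i - weight p q b i = -2"
      using w[OF assms(2)] by (simp add: alpha_def)
    then show ?thesis
      using True by (simp add: weight_diff_eq_minus_2[OF assms(1)])
  next
    case False
    then have "weight p q a i - weight p q b i = -1" "weight p q a j - weight p q b j = -1"
      using w[OF assms(2)] w[OF assms(3)] by (simp_all add: alpha_def)
    then have "a = q + i \<or> b = i" "a = q + j \<or> b = j"
      by (simp_all add: weight_diff_eq_minus_1[OF assms(1)])
    then show ?thesis
      using False by auto
  qed
qed

section \<open>Explicit root vectors\<close>

definition neg_alpha_vec :: "nat \<Rightarrow> nat \<Rightarrow> nat \<Rightarrow> (nat \<Rightarrow> complex) \<Rightarrow> cmat" where
  "neg_alpha_vec p q i u = (\<lambda>a b.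
     if p \<le> a \<and> a < q \<and> b = i then u a
     else if a = q + i \<and> p \<le> b \<and> b < q then cnj (u b)
     else 0)"

definition alpha_vec :: "nat \<Rightarrow> nat \<Rightarrow> nat \<Rightarrow> (nat \<Rightarrow> complex) \<Rightarrow> cmat" where
  "alpha_vec p q j u = (\<lambda>a b.
     if a = j \<and> p \<le> b \<and> b < q then u b
     else if p \<le> a \<and> a < q \<and> b = q + j then cnj (u a)
     else 0)"

definition neg_alpha_sum_vec :: "nat \<Rightarrow> nat \<Rightarrow> nat \<Rightarrow> nat \<Rightarrow> complex \<Rightarrow> cmat" where
  "neg_alpha_sum_vec p q i j x = (\<lambda>a b.
     if a = q + i \<and> b = j then x
     else if a = q + j \<and> b = i then - cnj x
     else 0)"

lemma neg_alpha_vec_eq_0_iff: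
  "neg_alpha_vec p q i u = 0 \<longleftrightarrow> (\<forall>k\<in>{p..<q}. u k = 0)"
  by (auto simp: neg_alpha_vec_def fun_eq_iff)

lemma neg_alpha_sum_vec_eq_0_iff: "neg_alpha_sum_vec p q i j x = 0 \<longleftrightarrow> x = 0"
  by (auto simp: neg_alpha_sum_vec_def fun_eq_iff dest: spec[of _ "q + i"])

lemma neg_alpha_vec_in_rootsp:
  assumes "p < q" "i < p"
  shows "neg_alpha_vec p q i u \<in> rootsp p q (- alpha i)"
  unfolding rootsp_iff[OF assms(1)] su_iff[OF assms(1)]
proof (intro conjI allI impI)
  show "inmat (p + q) (neg_alpha_vec p q i u)"
    using assms unfolding inmat_def neg_alpha_vec_def by auto
  show "(\<Sum>k<p + q. neg_alpha_vec p q i u k k) = 0"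
    using assms unfolding neg_alpha_vec_def by (intro sum.neutral) auto
  fix a b
  show "cnj (neg_alpha_vec p q i u (partner p q b) a) * partner_sign p q b
      + partner_sign p q a * neg_alpha_vec p q i u (partner p q a) b = 0"
    using assms unfolding neg_alpha_vec_def partner_def partner_sign_def by auto
  fix k :: nat
  assume "neg_alpha_vec p q i u a b \<noteq> 0"
  then have "(p \<le> a \<and> a < q \<and> b = i) \<or> (a = q + i \<and> p \<le> b \<and> b < q)"
    unfolding neg_alpha_vec_def by (auto split: if_splits)
  then show "weight p q a k - weight p q b k = (- alpha i) k"
    using assms by (auto simp: weight_middle weight_self weight_partner)
qed

lemma alpha_vec_in_rootsp:
  assumes "p < q" "j < p"
  shows "alpha_vec p q j u \<in> rootsp p q (alpha j)"
  unfolding rootsp_iff[OF assms(1)] su_iff[OF assms(1)]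
proof (intro conjI allI impI)
  show "inmat (p + q) (alpha_vec p q j u)"
    using assms unfolding inmat_def alpha_vec_def by auto
  show "(\<Sum>k<p + q. alpha_vec p q j u k k) = 0"
    using assms unfolding alpha_vec_def by (intro sum.neutral) auto
  fix a b
  show "cnj (alpha_vec p q j u (partner p q b) a) * partner_sign p q b
      + partner_sign p q a * alpha_vec p q j u (partner p q a) b = 0"
    using assms unfolding alpha_vec_def partner_def partner_sign_def by auto
  fix k :: nat
  assume "alpha_vec p q j u a b \<noteq> 0"
  then have "(a = j \<and> p \<le> b \<and> b < q) \<or> (p \<le> a \<and> a < q \<and> b = q + j)"
    unfolding alpha_vec_def by (auto split: if_splits)
  then show "weight p q a k - weight p q b k = alpha j k"
    using assms by (auto simp: weight_middle weight_self weight_partner)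
qed

lemma neg_alpha_sum_vec_in_rootsp:
  assumes "p < q" "i < p" "j < p" "i = j \<longrightarrow> cnj x = - x"
  shows "neg_alpha_sum_vec p q i j x \<in> rootsp p q (- (alpha i + alpha j))"
  unfolding rootsp_iff[OF assms(1)] su_iff[OF assms(1)]
proof (intro conjI allI impI)
  show "inmat (p + q) (neg_alpha_sum_vec p q i j x)"
    using assms unfolding inmat_def neg_alpha_sum_vec_def by auto
  show "(\<Sum>k<p + q. neg_alpha_sum_vec p q i j x k k) = 0"
    using assms unfolding neg_alpha_sum_vec_def by (intro sum.neutral) auto
  fix a b
  show "cnj (neg_alpha_sum_vec p q i j x (partner p q b) a) * partner_sign p q b
      + partner_sign p q a * neg_alpha_sum_vec p q i j x (partner p q a) b = 0"
    using assms unfolding neg_alpha_sum_vec_def partner_def partner_sign_def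
    by (cases "i = j") auto
  fix k :: nat
  assume "neg_alpha_sum_vec p q i j x a b \<noteq> 0"
  then have "(a = q + i \<and> b = j) \<or> (a = q + j \<and> b = i)"
    unfolding neg_alpha_sum_vec_def by (auto split: if_splits)
  then show "weight p q a k - weight p q b k = (- (alpha i + alpha j)) k"
    using assms by (auto simp: weight_self weight_partner)
qed

lemma rootsp_neg_alpha_eq:
  assumes "p < q" "i < p" "M \<in> rootsp p q (- alpha i)"
  shows "M = neg_alpha_vec p q i (\<lambda>a. M a i)"
proof -
  have "M (q + i) b = cnj (M b i)" if "p \<le> b" "b < q" for b
  proof -
    have "cnj (M (q + i) b) = M b i"
      using rootsp_adjoint[OF assms(1,3), of i b] that assms(1,2)
      by (simp add: partner_def partner_sign_def)
    then show ?thesis by (metis complex_cnj_cnj)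
  qed
  then show ?thesis
    using rootsp_neg_alpha_support[OF assms] unfolding neg_alpha_vec_def fun_eq_iff by auto
qed

lemma rootsp_neg_alpha_sum_eq:
  assumes "p < q" "i < p" "j < p" "M \<in> rootsp p q (- (alpha i + alpha j))"
  shows "M = neg_alpha_sum_vec p q i j (M (q + i) j)" "cnj (M (q + i) j) = - M (q + j) i"
proof -
  show "cnj (M (q + i) j) = - M (q + j) i"
    using rootsp_adjoint[OF assms(1,4), of i j] assms(1-3)
    by (simp add: partner_def partner_sign_def eq_neg_iff_add_eq_0)
  then show "M = neg_alpha_sum_vec p q i j (M (q + i) j)"
    using rootsp_neg_alpha_sum_support[OF assms] unfolding neg_alpha_sum_vec_def fun_eq_iff by auto
qed

lemma bracket_alpha_vec_neg_alpha_sum_vec: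
  assumes "p < q" "i < p" "j < p" "i = j \<longrightarrow> cnj x = - x" "x \<noteq> 0"
  shows "bracket (p+q) (alpha_vec p q j (\<lambda>k. - cnj (u k) / x)) (neg_alpha_sum_vec p q i j x)
    = neg_alpha_vec p q i u"
proof (intro ext)
  fix a b
  let ?Y = "alpha_vec p q j (\<lambda>k. - cnj (u k) / x)" and ?X = "neg_alpha_sum_vec p q i j x"
  have Y_col: "?Y a (q + j) = (if p \<le> a \<and> a < q then - u a / cnj x else 0)"
    using assms(1,3) by (simp add: alpha_vec_def)
  have Y_row: "?Y j b = (if p \<le> b \<and> b < q then - cnj (u b) / x else 0)"
    using assms(1,3) by (simp add: alpha_vec_def)
  have X_row: "?X (q + j) b = (if b = i then - cnj x else 0)"
  proof (cases "i = j")
    case True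
    then have "- cnj x = x" using assms(4) by simp
    with True show ?thesis by (simp add: neg_alpha_sum_vec_def)
  qed (simp add: neg_alpha_sum_vec_def)
  have X_col: "?X a j = (if a = q + i then x else 0)"
    by (auto simp: neg_alpha_sum_vec_def)
  have "mmul (p+q) ?Y ?X a b = ?Y a (q + j) * ?X (q + j) b"
    using assms(1-3) by (intro mmul_single_index) (auto simp: alpha_vec_def neg_alpha_sum_vec_def)
  moreover have "mmul (p+q) ?X ?Y a b = ?X a j * ?Y j b"
    using assms(1-3) by (intro mmul_single_index) (auto simp: alpha_vec_def neg_alpha_sum_vec_def)
  ultimately show "bracket (p+q) ?Y ?X a b = neg_alpha_vec p q i u a b"
    using assms(5) unfolding bracket_def Y_col Y_row X_row X_col
    by (auto simp: neg_alpha_vec_def)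
qed

lemma mmul_neg_alpha_vec:
  assumes "p < q" "i < p" "j < p"
  shows "mmul (p+q) (neg_alpha_vec p q i u) (neg_alpha_vec p q j u) a b
    = (if a = q + i \<and> b = j then of_real (\<Sum>k\<in>{p..<q}. (cmod (u k))\<^sup>2) else 0)"
proof (cases "a = q + i \<and> b = j")
  case True
  have "mmul (p+q) (neg_alpha_vec p q i u) (neg_alpha_vec p q j u) a b
      = (\<Sum>k<p+q. if k \<in> {p..<q} then cnj (u k) * u k else 0)"
    unfolding mmul_def using True assms by (intro sum.cong) (auto simp: neg_alpha_vec_def)
  also have "\<dots> = (\<Sum>k\<in>{..<p+q} \<inter> {p..<q}. cnj (u k) * u k)"
    by (simp add: sum.inter_restrict)
  also have "{..<p+q} \<inter> {p..<q} = {p..<q}"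
    using assms(1) by auto
  finally show ?thesis
    using True by (simp add: of_real_sum complex_norm_square mult.commute del: of_real_power)
next
  case False
  have "\<forall>k\<in>{..<p+q}. neg_alpha_vec p q i u a k * neg_alpha_vec p q j u k b = 0"
    using False assms unfolding neg_alpha_vec_def by auto
  then have "mmul (p+q) (neg_alpha_vec p q i u) (neg_alpha_vec p q j u) a b = 0"
    unfolding mmul_def by (rule sum.neutral)
  then show ?thesis
    unfolding if_not_P[OF False] .
qed

lemma bracket_neg_alpha_vec_neg_alpha_vec:
  assumes "p < q" "i < p" "j < p" "i \<noteq> j"
  shows "bracket (p+q) (neg_alpha_vec p q i u) (neg_alpha_vec p q j u)
    = neg_alpha_sum_vec p q i j (of_real (\<Sum>k\<in>{p..<q}. (cmod (u k))\<^sup>2))"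
  using assms(4)
  by (auto simp: fun_eq_iff bracket_def mmul_neg_alpha_vec[OF assms(1-3)]
      mmul_neg_alpha_vec[OF assms(1,3,2)] neg_alpha_sum_vec_def)

section \<open>Subalgebras normalised by \<open>b_H\<close>\<close>

lemma zero_in_rootsp: "p < q \<Longrightarrow> 0 \<in> rootsp p q c"
  by (simp add: rootsp_iff su_iff inmat_def)

lemma finite_posroots: "finite (posroots p)"
proof -
  have "posroots p \<subseteq> alpha ` {..<p} \<union> (\<lambda>(i, j). alpha i - alpha j) ` ({..<p} \<times> {..<p})
      \<union> (\<lambda>(i, j). alpha i + alpha j) ` ({..<p} \<times> {..<p})"
    unfolding posroots_def by force
  then show ?thesis
    by (rule finite_subset) auto
qed

lemma alpha_in_posroots: "j < p \<Longrightarrow> alpha j \<in> posroots p"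
  unfolding posroots_def by blast

lemma posroots_nonzero: "c \<in> posroots p \<Longrightarrow> \<exists>k<p. c k \<noteq> 0"
  unfolding posroots_def alpha_def by auto

lemma rootsp_subset_bH:
  assumes "p < q" "c \<in> posroots p"
  shows "rootsp p q c \<subseteq> bH p q"
proof
  fix X assume X: "X \<in> rootsp p q c"
  let ?Xs = "\<lambda>d. if d = c then X else 0"
  have "diagA p q (\<lambda>_. 0) = 0"
    by (simp add: diagA_def fun_eq_iff)
  moreover have "sum ?Xs (posroots p) = X"
    using assms(2) finite_posroots by (simp add: sum.delta')
  ultimately have "X = diagA p q (\<lambda>_. 0) + sum ?Xs (posroots p)"
    by simp
  moreover have "diagA p q (\<lambda>_. 0) \<in> aH p q"
    unfolding aH_def by simp
  moreover have "\<forall>d\<in>posroots p. ?Xs d \<in> rootsp p q d"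
    using X zero_in_rootsp[OF assms(1)] by simp
  ultimately show "X \<in> bH p q"
    unfolding bH_def by blast
qed

lemma rootsp_subset_of_aH_subset:
  assumes "p < q" "subalgebra p q h0" "\<forall>Y\<in>bH p q. \<forall>X\<in>h0. bracket (p+q) Y X \<in> h0"
    and "aH p q \<subseteq> h0" "c \<in> posroots p"
  shows "rootsp p q c \<subseteq> h0"
proof
  fix X assume X: "X \<in> rootsp p q c"
  obtain k where k: "k < p" "c k \<noteq> 0"
    using posroots_nonzero[OF assms(5)] by blast
  let ?D = "diagA p q (\<lambda>i. if i = k then 1 else 0)"
  have "?D \<in> h0"
    using assms(4) unfolding aH_def by blast
  then have "bracket (p+q) X ?D \<in> h0"
    using assms(3) X rootsp_subset_bH[OF assms(1,5)] by blast
  moreover have "bracket (p+q) X ?D = rsmult (- of_int (c k)) X"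
    using X rootval_indicator[OF k(1)] unfolding rootsp_def bracket_swap[of _ X]
    by (simp add: rsmult_def fun_eq_iff)
  ultimately show "X \<in> h0"
    using subalgebra_rsmult_cancel[OF assms(2)] k(2) by fastforce
qed

lemma bH_subset_of_aH_subset:
  assumes "p < q" "subalgebra p q h0" "\<forall>Y\<in>bH p q. \<forall>X\<in>h0. bracket (p+q) Y X \<in> h0"
    and "aH p q \<subseteq> h0"
  shows "bH p q \<subseteq> h0"
proof
  fix Z assume "Z \<in> bH p q"
  then obtain H Xs where Z: "Z = H + (\<Sum>c\<in>posroots p. Xs c)" "H \<in> aH p q"
    and Xs: "\<forall>c\<in>posroots p. Xs c \<in> rootsp p q c"
    unfolding bH_def by blast
  have "(\<Sum>c\<in>posroots p. Xs c) \<in> h0"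
    by (rule subalgebra_sum[OF assms(2)])
      (use Xs rootsp_subset_of_aH_subset[OF assms] in blast)
  moreover have "H \<in> h0"
    using Z(2) assms(4) by blast
  ultimately show "Z \<in> h0"
    using Z(1) assms(2) unfolding subalgebra_def by simp
qed

lemma rootsp_neg_alpha_subset_of_neg_alpha_sum:
  assumes "p < q" "\<forall>Y\<in>bH p q. \<forall>X\<in>h0. bracket (p+q) Y X \<in> h0"
    and "i < p" "j < p" "X \<in> rootsp p q (- (alpha i + alpha j))" "X \<in> h0" "X \<noteq> 0"
  shows "rootsp p q (- alpha i) \<subseteq> h0"
proof
  fix Z assume Z: "Z \<in> rootsp p q (- alpha i)"
  define x where "x = X (q + i) j"
  have X_eq: "X = neg_alpha_sum_vec p q i j x" and "cnj x = - X (q + j) i"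
    using rootsp_neg_alpha_sum_eq[OF assms(1,3-5)] unfolding x_def by auto
  then have imag: "i = j \<longrightarrow> cnj x = - x"
    unfolding x_def by auto
  have "x \<noteq> 0"
    using X_eq assms(7) by (simp add: neg_alpha_sum_vec_eq_0_iff)
  let ?Y = "alpha_vec p q j (\<lambda>k. - cnj (Z k i) / x)"
  have "?Y \<in> bH p q"
    using alpha_vec_in_rootsp[OF assms(1,4)] rootsp_subset_bH[OF assms(1) alpha_in_posroots[OF assms(4)]]
    by blast
  then have "bracket (p+q) ?Y X \<in> h0"
    using assms(2,6) by blast
  moreover have "bracket (p+q) ?Y X = Z"
    using bracket_alpha_vec_neg_alpha_sum_vec[OF assms(1,3,4) imag \<open>x \<noteq> 0\<close>]
      rootsp_neg_alpha_eq[OF assms(1,3) Z] X_eq by simp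
  ultimately show "Z \<in> h0" by simp
qed

lemma rootsp_neg_alpha_subset_of_neg_alpha:
  assumes "p < q" "subalgebra p q h0" "\<forall>Y\<in>bH p q. \<forall>X\<in>h0. bracket (p+q) Y X \<in> h0"
    and "i < p" "j < p" "i \<noteq> j" "rootsp p q (- alpha i) \<subseteq> h0"
    and "X \<in> rootsp p q (- alpha j)" "X \<in> h0" "X \<noteq> 0"
  shows "rootsp p q (- alpha j) \<subseteq> h0"
proof -
  define u where "u = (\<lambda>a. X a j)"
  define s where "s = (\<Sum>k\<in>{p..<q}. (cmod (u k))\<^sup>2)"
  have X_eq: "X = neg_alpha_vec p q j u"
    using rootsp_neg_alpha_eq[OF assms(1,5,8)] unfolding u_def .
  then have "\<exists>k\<in>{p..<q}. u k \<noteq> 0"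
    using assms(10) neg_alpha_vec_eq_0_iff by blast
  then have "s \<noteq> 0"
    unfolding s_def by (subst sum_nonneg_eq_0_iff) auto
  then have nonzero: "neg_alpha_sum_vec p q i j (of_real s) \<noteq> 0"
    by (simp add: neg_alpha_sum_vec_eq_0_iff)
  have "neg_alpha_vec p q i u \<in> h0"
    using assms(7) neg_alpha_vec_in_rootsp[OF assms(1,4)] by blast
  then have "bracket (p+q) (neg_alpha_vec p q i u) X \<in> h0"
    using assms(2,9) unfolding subalgebra_def by blast
  then have "neg_alpha_sum_vec p q i j (of_real s) \<in> h0"
    using bracket_neg_alpha_vec_neg_alpha_vec[OF assms(1,4-6)] X_eq unfolding s_def by simp
  moreover have "neg_alpha_sum_vec p q i j (of_real s) \<in> rootsp p q (- (alpha j + alpha i))"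
    using neg_alpha_sum_vec_in_rootsp[OF assms(1,4,5)] assms(6) by (simp add: add.commute)
  ultimately show ?thesis
    using rootsp_neg_alpha_subset_of_neg_alpha_sum[OF assms(1,3,5,4)] nonzero by blast
qed

theorem mainTheorem6:
  fixes p q :: nat and h0 :: "cmat set"
  assumes "0 < p" and "p < q"
    and "subalgebra p q h0"
    and "\<forall>Y\<in>bH p q. \<forall>X\<in>h0. bracket (p+q) Y X \<in> h0"
  shows "(aH p q \<subseteq> h0 \<longrightarrow> bH p q \<subseteq> h0)
       \<and> (\<forall>i<p. \<forall>j<p. (\<exists>X\<in>rootsp p q (- (alpha i + alpha j)) \<inter> h0. X \<noteq> 0)
              \<longrightarrow> rootsp p q (- alpha i) \<subseteq> h0)
       \<and> (2 \<le> p \<longrightarrow> (\<forall>i<p. \<forall>j<p. i \<noteq> j \<longrightarrow> rootsp p q (- alpha i) \<subseteq> h0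
              \<longrightarrow> (\<exists>X\<in>rootsp p q (- alpha j) \<inter> h0. X \<noteq> 0)
              \<longrightarrow> rootsp p q (- alpha j) \<subseteq> h0))"
proof (intro conjI allI impI)
  assume "aH p q \<subseteq> h0"
  then show "bH p q \<subseteq> h0"
    by (rule bH_subset_of_aH_subset[OF assms(2-4)])
next
  fix i j
  assume "i < p" "j < p" "\<exists>X\<in>rootsp p q (- (alpha i + alpha j)) \<inter> h0. X \<noteq> 0"
  then show "rootsp p q (- alpha i) \<subseteq> h0"
    using rootsp_neg_alpha_subset_of_neg_alpha_sum[OF assms(2,4)] by blast
next
  fix i j
  assume "i < p" "j < p" "i \<noteq> j" "rootsp p q (- alpha i) \<subseteq> h0"
    and "\<exists>X\<in>rootsp p q (- alpha j) \<inter> h0. X \<noteq> 0"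
  then show "rootsp p q (- alpha j) \<subseteq> h0"
    using rootsp_neg_alpha_subset_of_neg_alpha[OF assms(2-4)] by blast
qed

end
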